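(* Consider the decentralized secure pliable index coding problem with $m$ users, $m$ messages and $s$-circular-shift side information sets, as defined in the context, and restrict all encoding functions to be linear. In each of the following cases there is no (linear) scheme that satisfies all users while meeting the individual security constraint: (1) $s=1$ and $m\geq 3$; (2) $s=2$ and $m\geq 5$; (3) $s=3$ and $m$ odd; (4) $s=m-2$ and $m$ odd.
   Context: Decentralized secure PICOD with circular shift side information. Fix integers $m\ge 2$ and $s\in[m-1]$ (where $[a]=\{1,\dots,a\}$). There are $m$ users $u_1,\dots,u_m$, no central transmitter, and $m$ independent messages $w_1,\dots,w_m$, each consisting of $\kappa\in\mathbb{N}$ independent uniformly distributed bits (for linear schemes, symbols of a finite field). User $u_i$ knows the messages $W_{A_i}=\{w_a: a\in A_i\}$ with $A_i=\{i,i+1,\dots,i+s-1\}$, indices taken modulo $m$ (in $[m]$); the collection of all $A_i$ is known to everyone. Users communicate over a shared noiseless broadcast channel, one at a time: user $u_j$ sends a codeword $x_j=\mathsf{ENC}_j(W_{A_j})$ of length $\ell_j\kappa$, and the total code-length is $\ell=\sum_j \ell_j$; let $x$ denote all transmitted codewords. Each user $u_j$ decodes $\widehat w_j=\mathsf{DEC}_j(W_{A_j},x)$; user $u_j$ is satisfied if $\widehat w_j=w_{d_j}$ for some $d_j\in[m]\setminus A_j$ (any message outside its side information). Individual security requires that for every user $u_j$, $I(W_i; x\mid W_{A_j})=0$ for all $i\in[m]\setminus(\{d_j\}\cup A_j)$, i.e., user $u_j$ obtains no information about any message outside its side information other than its decoded one. A scheme is feasible if all users are satisfied and the security constraint holds;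 $\kappa$ may be taken arbitrarily large. Linear encoding means each $\mathsf{ENC}_j$ is a linear map. *)

theory Defs
  imports Main
begin

definition side_info :: "nat \<Rightarrow> nat \<Rightarrow> nat \<Rightarrow> nat set" where
  "side_info m s i = {((i - 1 + t) mod m) + 1 | t. t < s}"

text \<open>Message assignments: message a (1 <= a <= m) is the vector (W a 0, ..., W a (kappa-1))
  over the finite field; all other entries are 0. Messages are uniform and independent,
  i.e. W is uniformly distributed over this (finite) set.\<close>
definition msg_space :: "nat \<Rightarrow> nat \<Rightarrow> (nat \<Rightarrow> nat \<Rightarrow> 'f::zero) set" where
  "msg_space m \<kappa> = {W. \<forall>a k. W a k \<noteq> 0 \<longrightarrow> a \<in> {1..m} \<and> k < \<kappa>}"

definition restr :: "nat set \<Rightarrow> (nat \<Rightarrow> nat \<Rightarrow> 'f::zero) \<Rightarrow> (nat \<Rightarrow> nat \<Rightarrow> 'f)" where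
  "restr S W = (\<lambda>a k. if a \<in> S then W a k else 0)"

definition lin_transmit ::
  "nat \<Rightarrow> nat \<Rightarrow> nat \<Rightarrow> (nat \<Rightarrow> nat) \<Rightarrow> (nat \<Rightarrow> nat \<Rightarrow> nat \<Rightarrow> nat \<Rightarrow> 'f::comm_ring_1)
     \<Rightarrow> (nat \<Rightarrow> nat \<Rightarrow> 'f) \<Rightarrow> (nat \<Rightarrow> nat \<Rightarrow> 'f)" where
  "lin_transmit m s \<kappa> L c W = (\<lambda>j r. if j \<in> {1..m} \<and> r < L j
      then (\<Sum>a\<in>side_info m s j. \<Sum>k<\<kappa>. c j r a k * W a k) else 0)"

text \<open>Conditional independence of X and Y given Z when the underlying outcome is uniform
  on the finite set \<Omega>: P(x,y,z) P(z) = P(x,z) P(y,z) for all values; this is exactly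
  I(X;Y|Z) = 0.\<close>
definition cond_indep_unif ::
  "'w set \<Rightarrow> ('w \<Rightarrow> 'x) \<Rightarrow> ('w \<Rightarrow> 'y) \<Rightarrow> ('w \<Rightarrow> 'z) \<Rightarrow> bool" where
  "cond_indep_unif \<Omega> X Y Z \<longleftrightarrow> (\<forall>x y z.
      card {w\<in>\<Omega>. X w = x \<and> Y w = y \<and> Z w = z} * card {w\<in>\<Omega>. Z w = z}
    = card {w\<in>\<Omega>. X w = x \<and> Z w = z} * card {w\<in>\<Omega>. Y w = y \<and> Z w = z})"

definition feasible_linear ::
  "nat \<Rightarrow> nat \<Rightarrow> nat \<Rightarrow> (nat \<Rightarrow> nat) \<Rightarrow> (nat \<Rightarrow> nat \<Rightarrow> nat \<Rightarrow> nat \<Rightarrow> 'f::{field,finite}) \<Rightarrow> bool" where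
  "feasible_linear m s \<kappa> L c \<longleftrightarrow>
     (\<forall>j\<in>{1..m}. \<exists>d\<in>{1..m} - side_info m s j.
        (\<exists>DEC :: (nat \<Rightarrow> nat \<Rightarrow> 'f) \<Rightarrow> (nat \<Rightarrow> nat \<Rightarrow> 'f) \<Rightarrow> (nat \<Rightarrow> 'f).
           \<forall>W\<in>(msg_space m \<kappa> :: (nat \<Rightarrow> nat \<Rightarrow> 'f) set).
             DEC (restr (side_info m s j) W) (lin_transmit m s \<kappa> L c W) = W d)
      \<and> (\<forall>i\<in>{1..m} - ({d} \<union> side_info m s j).
           cond_indep_unif (msg_space m \<kappa> :: (nat \<Rightarrow> nat \<Rightarrow> 'f) set)
             (\<lambda>W. W i) (lin_transmit m s \<kappa> L c) (\<lambda>W. restr (side_info m s j) W)))"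

end

theory Submission
  imports Defs
begin

text \<open>Everything is governed by the kernel of the broadcast: the message assignments that
  every user sees as the all-zero transmission. Decodability says that a kernel element
  vanishing on \<open>A\<^sub>j\<close> vanishes at \<open>d\<^sub>j\<close>; individual security says that for
  \<open>i \<notin> A\<^sub>j \<union> {d\<^sub>j}\<close> every value at \<open>i\<close> is taken by a kernel element vanishing on \<open>A\<^sub>j\<close>;
  and since each codeword only depends on its sender's window, an assignment agreeing with
  some kernel element on every window lies in the kernel. Consequently a position where the
  whole kernel vanishes is decoded by every user who does not know it, and user \<open>y\<close> decodes
  \<open>y + s\<close> iff user \<open>y + 1\<close> decodes \<open>y\<close>. If every user decodes one of these two boundary
  positions, the two kinds of users alternate around the cycle and \<open>m\<close> is even; this settles
  \<open>s = m - 2\<close>. For \<open>s \<le> 3\<close> the other decoding choices are ruled out by gluing kernel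
  elements window by window into one that vanishes on some \<open>A\<^sub>j\<close> but not at \<open>d\<^sub>j\<close>.\<close>

lemma finite_msg_space: "finite (msg_space m \<kappa> :: (nat \<Rightarrow> nat \<Rightarrow> 'f::{zero,finite}) set)"
proof -
  let ?V = "{v :: nat \<Rightarrow> 'f. \<forall>k. (k \<in> {..<\<kappa>} \<longrightarrow> v k \<in> UNIV) \<and> (k \<notin> {..<\<kappa>} \<longrightarrow> v k = 0)}"
  have "finite ?V" by (rule finite_set_of_finite_funs) auto
  then have "finite {W :: nat \<Rightarrow> nat \<Rightarrow> 'f. \<forall>a. (a \<in> {1..m} \<longrightarrow> W a \<in> ?V) \<and> (a \<notin> {1..m} \<longrightarrow> W a = (\<lambda>_. 0))}"
    by (intro finite_set_of_finite_funs) auto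
  moreover have "msg_space m \<kappa> \<subseteq> {W. \<forall>a. (a \<in> {1..m} \<longrightarrow> W a \<in> ?V) \<and> (a \<notin> {1..m} \<longrightarrow> W a = (\<lambda>_. 0))}"
    unfolding msg_space_def by (auto simp: fun_eq_iff)
  ultimately show ?thesis by (rule finite_subset[rotated])
qed

lemma point_in_msg_space:
  assumes "a \<in> {1..m}" "\<forall>k. \<kappa> \<le> k \<longrightarrow> v k = 0"
  shows "(\<lambda>b. if b = a then v else (\<lambda>_. 0)) \<in> msg_space m \<kappa>"
  using assms unfolding msg_space_def by (auto simp: not_less[symmetric])

lemma lin_transmit_diff:
  "lin_transmit m s \<kappa> L c (D - D') = lin_transmit m s \<kappa> L c D - lin_transmit m s \<kappa> L c D'"
  unfolding lin_transmit_def by (auto simp: fun_eq_iff right_diff_distrib sum_subtractf)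

lemma lin_transmit_local:
  assumes "\<forall>a\<in>side_info m s j. D a = D' a"
  shows "lin_transmit m s \<kappa> L c D j = lin_transmit m s \<kappa> L c D' j"
  using assms unfolding lin_transmit_def by (auto intro!: sum.cong)

locale secure_linear_scheme =
  fixes m s \<kappa> :: nat and L :: "nat \<Rightarrow> nat"
    and c :: "nat \<Rightarrow> nat \<Rightarrow> nat \<Rightarrow> nat \<Rightarrow> 'f::{field,finite}"
    and dec :: "nat \<Rightarrow> nat"
  assumes s_pos: "1 \<le> s" and s_less_m: "s < m" and \<kappa>_pos: "1 \<le> \<kappa>"
    and dec_outside: "\<And>j. j \<in> {1..m} \<Longrightarrow> dec j \<in> {1..m} - side_info m s j"
    and decodable: "\<And>j. j \<in> {1..m} \<Longrightarrow>
           \<exists>DEC :: (nat \<Rightarrow> nat \<Rightarrow> 'f) \<Rightarrow> (nat \<Rightarrow> nat \<Rightarrow> 'f) \<Rightarrow> (nat \<Rightarrow> 'f).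
             \<forall>W\<in>msg_space m \<kappa>. DEC (restr (side_info m s j) W) (lin_transmit m s \<kappa> L c W) = W (dec j)"
    and secure: "\<And>j i. j \<in> {1..m} \<Longrightarrow> i \<in> {1..m} - ({dec j} \<union> side_info m s j) \<Longrightarrow>
           cond_indep_unif (msg_space m \<kappa> :: (nat \<Rightarrow> nat \<Rightarrow> 'f) set)
             (\<lambda>W. W i) (lin_transmit m s \<kappa> L c) (\<lambda>W. restr (side_info m s j) W)"
begin

abbreviation msgs :: "(nat \<Rightarrow> nat \<Rightarrow> 'f) set" where "msgs \<equiv> msg_space m \<kappa>"
abbreviation broadcast :: "(nat \<Rightarrow> nat \<Rightarrow> 'f) \<Rightarrow> (nat \<Rightarrow> nat \<Rightarrow> 'f)" where
  "broadcast \<equiv> lin_transmit m s \<kappa> L c"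

subsection \<open>The kernel of the broadcast\<close>

definition kernel :: "(nat \<Rightarrow> nat \<Rightarrow> 'f) set" where
  "kernel = {D \<in> msgs. broadcast D = (\<lambda>_ _. 0)}"

lemma msgs_vanish_beyond: "D \<in> msgs \<Longrightarrow> \<kappa> \<le> k \<Longrightarrow> D a k = 0"
  unfolding msg_space_def by (auto simp: not_le[symmetric])

lemma zero_in_msgs: "(\<lambda>_ _. 0) \<in> msgs"
  unfolding msg_space_def by auto

lemma broadcast_zero: "broadcast (\<lambda>_ _. 0) = (\<lambda>_ _. 0)"
  unfolding lin_transmit_def by (auto simp: fun_eq_iff)

lemma zero_in_kernel: "(\<lambda>_ _. 0) \<in> kernel"
  unfolding kernel_def using zero_in_msgs broadcast_zero by auto

lemma kernel_msgs: "D \<in> kernel \<Longrightarrow> D \<in> msgs"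
  unfolding kernel_def by auto

lemma kernel_vanish_beyond: "X \<in> kernel \<Longrightarrow> \<forall>k. \<kappa> \<le> k \<longrightarrow> X a k = 0"
  using msgs_vanish_beyond[OF kernel_msgs] by blast

lemma msgs_diff: "D \<in> msgs \<Longrightarrow> D' \<in> msgs \<Longrightarrow> D - D' \<in> msgs"
  unfolding msg_space_def by auto (metis diff_self)+

lemma kernel_diff: "D \<in> kernel \<Longrightarrow> D' \<in> kernel \<Longrightarrow> D - D' \<in> kernel"
  unfolding kernel_def by (auto simp: msgs_diff lin_transmit_diff fun_eq_iff)

lemma kernel_by_windows:
  assumes "E \<in> msgs"
    and "\<And>j. j \<in> {1..m} \<Longrightarrow> \<exists>D\<in>kernel. \<forall>a\<in>side_info m s j. E a = D a"
  shows "E \<in> kernel"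
proof -
  have "broadcast E j = (\<lambda>_. 0)" for j
  proof (cases "j \<in> {1..m}")
    case True
    then obtain D where "D \<in> kernel" "\<forall>a\<in>side_info m s j. E a = D a"
      using assms(2) by blast
    then show ?thesis
      using lin_transmit_local[where D = E and D' = D] unfolding kernel_def
      by (auto simp: fun_eq_iff)
  qed (auto simp: lin_transmit_def fun_eq_iff)
  then show ?thesis unfolding kernel_def using assms(1) by auto
qed

lemma kernel_zero_at_decoded:
  assumes j: "j \<in> {1..m}" and D: "D \<in> kernel" and zero: "\<forall>a\<in>side_info m s j. D a = (\<lambda>_. 0)"
  shows "D (dec j) = (\<lambda>_. 0)"
proof -
  obtain DEC :: "(nat \<Rightarrow> nat \<Rightarrow> 'f) \<Rightarrow> (nat \<Rightarrow> nat \<Rightarrow> 'f) \<Rightarrow> (nat \<Rightarrow> 'f)" where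
    DEC: "\<forall>W\<in>msgs. DEC (restr (side_info m s j) W) (broadcast W) = W (dec j)"
    using decodable[OF j] by blast
  have "restr (side_info m s j) D = restr (side_info m s j) (\<lambda>_ _. 0)"
    using zero unfolding restr_def by (auto simp: fun_eq_iff)
  moreover have "broadcast D = broadcast (\<lambda>_ _. 0)"
    using D broadcast_zero unfolding kernel_def by auto
  ultimately show ?thesis using DEC kernel_msgs[OF D] zero_in_msgs by metis
qed

text \<open>Conditioned on \<open>W\<^sub>A\<^sub>j = 0\<close>, both the event \<open>W i = v\<close> and the event \<open>x = 0\<close> have
  positive probability (witnessed by a point mass at \<open>i\<close> and by \<open>W = 0\<close>), so independence
  makes their intersection nonempty.\<close>
lemma kernel_secure_extension:
  assumes j: "j \<in> {1..m}" and i: "i \<in> {1..m}" "i \<notin> side_info m s j" "i \<noteq> dec j"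
    and v: "\<forall>k. \<kappa> \<le> k \<longrightarrow> v k = 0"
  shows "\<exists>D\<in>kernel. (\<forall>a\<in>side_info m s j. D a = (\<lambda>_. 0)) \<and> D i = v"
proof -
  let ?A = "side_info m s j"
  define S where "S P = {W\<in>msgs. P W \<and> restr ?A W = (\<lambda>_ _. 0)}" for P
  have card_pos: "card (S P) > 0" if "W \<in> S P" for P W
    using that finite_msg_space[of m \<kappa>] card_gt_0_iff unfolding S_def by fastforce
  have "card (S (\<lambda>W. W i = v \<and> broadcast W = (\<lambda>_ _. 0))) * card (S (\<lambda>_. True))
      = card (S (\<lambda>W. W i = v)) * card (S (\<lambda>W. broadcast W = (\<lambda>_ _. 0)))"
    using secure[OF j] i unfolding cond_indep_unif_def S_def by simp
  moreover have "card (S (\<lambda>W. W i = v)) > 0"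
    by (rule card_pos[where W = "\<lambda>b. if b = i then v else (\<lambda>_. 0)"])
      (use i point_in_msg_space[OF i(1) v] in \<open>auto simp: S_def restr_def fun_eq_iff\<close>)
  moreover have "card (S (\<lambda>W. broadcast W = (\<lambda>_ _. 0))) > 0"
    by (rule card_pos[where W = "\<lambda>_ _. 0"])
      (auto simp: S_def zero_in_msgs broadcast_zero restr_def)
  ultimately have "card (S (\<lambda>W. W i = v \<and> broadcast W = (\<lambda>_ _. 0))) \<noteq> 0"
    by (cases "card (S (\<lambda>W. W i = v \<and> broadcast W = (\<lambda>_ _. 0))) = 0") auto
  then have "S (\<lambda>W. W i = v \<and> broadcast W = (\<lambda>_ _. 0)) \<noteq> {}"
    by auto
  then obtain W where W: "W \<in> msgs" "W i = v" "broadcast W = (\<lambda>_ _. 0)" "restr ?A W = (\<lambda>_ _. 0)"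
    unfolding S_def by blast
  have "\<forall>a\<in>?A. W a = (\<lambda>_. 0)"
  proof
    fix a assume "a \<in> ?A"
    then show "W a = (\<lambda>_. 0)" using fun_cong[OF W(4), of a] unfolding restr_def by simp
  qed
  then show ?thesis using W unfolding kernel_def by auto
qed

subsection \<open>Cyclic positions\<close>

lemma m_pos: "0 < int m"
  using s_pos s_less_m by simp

text \<open>Users and messages are indexed by integers modulo \<open>m\<close>, so that shifts such as
  \<open>y + s\<close> and \<open>y - 1\<close> wrap around the cycle.\<close>
definition pos :: "int \<Rightarrow> nat" where
  "pos y = nat (y mod int m) + 1"

lemma pos_range: "pos y \<in> {1..m}"
proof -
  have "nat (y mod int m) < m" using m_pos by (simp add: nat_less_iff)
  then show ?thesis unfolding pos_def by simp
qed

lemma pos_of_nat: "a \<in> {1..m} \<Longrightarrow> pos (int a - 1) = a"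
  unfolding pos_def by auto

lemma pos_eq_iff: "pos a = pos b \<longleftrightarrow> (a - b) mod int m = 0"
proof -
  have "pos a = pos b \<longleftrightarrow> a mod int m = b mod int m"
    unfolding pos_def using m_pos by (simp add: eq_nat_nat_iff)
  also have "\<dots> \<longleftrightarrow> (a - b) mod int m = 0"
    by (simp only: mod_eq_dvd_iff dvd_eq_mod_eq_0)
  finally show ?thesis .
qed

lemma pos_eq_dvd_iff: "pos a = pos b \<longleftrightarrow> int m dvd a - b"
  by (simp add: pos_eq_iff dvd_eq_mod_eq_0)

lemma pos_neqI: "a \<noteq> b \<Longrightarrow> \<bar>a - b\<bar> < int m \<Longrightarrow> pos a \<noteq> pos b"
  using dvd_imp_le_int[of "a - b" "int m"] by (auto simp: pos_eq_dvd_iff)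

lemma mod_m_eqI: "x = r \<or> x = r - int m \<Longrightarrow> 0 \<le> r \<Longrightarrow> r < int m \<Longrightarrow> x mod int m = r"
  by auto

lemma pos_offset: "pos (y + (z - y) mod int m) = pos z"
  unfolding pos_def by (simp add: mod_add_right_eq)

lemma ball_pos_add_period:
  "\<forall>x\<in>{a..<b}. P (pos x) \<Longrightarrow> \<forall>x\<in>{a + int m..<b + int m}. P (pos x)"
proof
  fix x assume "\<forall>x\<in>{a..<b}. P (pos x)" "x \<in> {a + int m..<b + int m}"
  moreover have "pos x = pos (x - int m)"
    by (simp add: pos_eq_dvd_iff)
  ultimately show "P (pos x)"
    by auto
qed

lemma side_info_pos: "side_info m s (pos y) = pos ` {y..<y + int s}"
proof -
  have "((pos y - 1 + t) mod m) + 1 = pos (y + int t)" for t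
  proof -
    have "int ((nat (y mod int m) + t) mod m) = (y + int t) mod int m"
      using m_pos by (simp add: zmod_int mod_add_left_eq)
    then show ?thesis unfolding pos_def by simp
  qed
  moreover have "{y..<y + int s} = (\<lambda>t. y + int t) ` {..<s}"
  proof (intro equalityI subsetI)
    fix x assume "x \<in> {y..<y + int s}"
    then have "x = y + int (nat (x - y))" "nat (x - y) < s" by auto
    then show "x \<in> (\<lambda>t. y + int t) ` {..<s}" by blast
  qed auto
  ultimately show ?thesis unfolding side_info_def by (auto simp: image_image)
qed

lemma pos_in_side_info_iff: "pos z \<in> side_info m s (pos y) \<longleftrightarrow> (z - y) mod int m < int s"
proof
  assume "pos z \<in> side_info m s (pos y)"
  then obtain x where x: "y \<le> x" "x < y + int s" "pos z = pos x"
    unfolding side_info_pos by auto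
  then have "(z - y) mod int m = (x - y) mod int m"
    unfolding pos_eq_dvd_iff mod_eq_dvd_iff by simp
  also have "\<dots> = x - y"
    using x s_less_m by simp
  finally show "(z - y) mod int m < int s" using x by simp
next
  assume "(z - y) mod int m < int s"
  then have "y + (z - y) mod int m \<in> {y..<y + int s}"
    using m_pos by simp
  then show "pos z \<in> side_info m s (pos y)"
    unfolding side_info_pos using pos_offset by (metis image_eqI)
qed

lemma decoded_outside:
  assumes "dec (pos y) = pos z"
  shows "int s \<le> (z - y) mod int m"
proof -
  have "pos z \<notin> side_info m s (pos y)"
    using dec_outside[OF pos_range[of y]] assms by auto
  then show ?thesis unfolding pos_in_side_info_iff by simp
qed

lemma decoded_offset:
  obtains r where "int s \<le> r" "r < int m" "dec (pos y) = pos (y + r)"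
proof -
  obtain z where z: "dec (pos y) = pos z"
    using dec_outside[OF pos_range] pos_of_nat by (metis DiffD1)
  then show thesis
    using that[of "(z - y) mod int m"] decoded_outside[OF z] pos_offset m_pos by simp
qed

definition zero_on_window :: "(nat \<Rightarrow> nat \<Rightarrow> 'f) \<Rightarrow> int \<Rightarrow> bool" where
  "zero_on_window D y \<longleftrightarrow> (\<forall>x\<in>{y..<y + int s}. D (pos x) = (\<lambda>_. 0))"

lemma zero_on_window_extend:
  "zero_on_window D y \<and> D (pos (y + int s)) = (\<lambda>_. 0) \<longleftrightarrow>
   D (pos y) = (\<lambda>_. 0) \<and> zero_on_window D (y + 1)"
proof -
  have "insert (y + int s) {y..<y + int s} = insert y {y + 1..<y + 1 + int s}"
    using s_pos by auto
  then have "(\<forall>x\<in>insert (y + int s) {y..<y + int s}. D (pos x) = (\<lambda>_. 0)) \<longleftrightarrow>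
      (\<forall>x\<in>insert y {y + 1..<y + 1 + int s}. D (pos x) = (\<lambda>_. 0))"
    by (simp only:)
  then show ?thesis unfolding zero_on_window_def by auto
qed

lemma zero_on_window_mod:
  assumes "zero_on_window D y" "(x - y) mod int m < int s"
  shows "D (pos x) = (\<lambda>_. 0)"
proof -
  have "y + (x - y) mod int m \<in> {y..<y + int s}"
    using assms(2) m_pos by simp
  then show ?thesis
    using assms(1) pos_offset unfolding zero_on_window_def by metis
qed

lemma kernel_zero_at_decoded_pos:
  "D \<in> kernel \<Longrightarrow> zero_on_window D y \<Longrightarrow> D (dec (pos y)) = (\<lambda>_. 0)"
  by (rule kernel_zero_at_decoded[OF pos_range])
    (auto simp: zero_on_window_def side_info_pos)

lemma kernel_secure_extension_pos:
  assumes "int s \<le> (z - y) mod int m" "pos z \<noteq> dec (pos y)" "\<forall>k. \<kappa> \<le> k \<longrightarrow> v k = 0"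
  shows "\<exists>D\<in>kernel. zero_on_window D y \<and> D (pos z) = v"
proof -
  have outside: "pos z \<notin> side_info m s (pos y)"
    using assms(1) by (simp add: pos_in_side_info_iff)
  show ?thesis
    using kernel_secure_extension[OF pos_range pos_range outside] assms(2,3)
    by (auto simp: zero_on_window_def side_info_pos)
qed

lemma kernel_by_windows_pos:
  assumes "E \<in> msgs"
    and "\<And>q. 0 \<le> q \<Longrightarrow> q < int m \<Longrightarrow> \<exists>D\<in>kernel. \<forall>x\<in>{j + q..<j + q + int s}. E (pos x) = D (pos x)"
  shows "E \<in> kernel"
proof (rule kernel_by_windows[OF assms(1)])
  fix a assume "a \<in> {1..m}"
  define q where "q = (int a - 1 - j) mod int m"
  have a: "pos (j + q) = a"
    unfolding q_def using pos_offset pos_of_nat[OF \<open>a \<in> {1..m}\<close>] by metis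
  obtain D where D: "D \<in> kernel" "\<forall>x\<in>{j + q..<j + q + int s}. E (pos x) = D (pos x)"
    using assms(2)[of q] m_pos unfolding q_def by auto
  have "\<forall>b\<in>side_info m s a. E b = D b"
    unfolding a[symmetric] side_info_pos using D(2) by blast
  then show "\<exists>D\<in>kernel. \<forall>b\<in>side_info m s a. E b = D b"
    using D(1) by blast
qed

lemma free_outside_decoded:
  assumes "int s \<le> (z - y) mod int m" "pos z \<noteq> dec (pos y)"
  obtains X where "X \<in> kernel" "zero_on_window X y" "X (pos z) \<noteq> (\<lambda>_. 0)"
proof -
  let ?v = "\<lambda>k. if k = 0 then 1 else 0 :: 'f"
  have v: "\<forall>k. \<kappa> \<le> k \<longrightarrow> ?v k = 0" "?v \<noteq> (\<lambda>_. 0)"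
    using \<kappa>_pos by (auto simp: fun_eq_iff)
  obtain X where X: "X \<in> kernel" "zero_on_window X y" "X (pos z) = ?v"
    using kernel_secure_extension_pos[OF assms v(1)] by blast
  show thesis
    by (rule that[OF X(1,2)]) (use X(3) v(2) in simp)
qed

text \<open>All kernel elements vanish at \<open>a\<close> exactly when the broadcast determines \<open>w\<^sub>a\<close>.\<close>
definition revealed :: "nat \<Rightarrow> bool" where
  "revealed a \<longleftrightarrow> (\<forall>X\<in>kernel. X a = (\<lambda>_. 0))"

lemma revealed_decoded: "revealed (pos z) \<Longrightarrow> int s \<le> (z - y) mod int m \<Longrightarrow> dec (pos y) = pos z"
  using free_outside_decoded unfolding revealed_def by metis

lemma revealed_unique:
  assumes "2 * s < m" "revealed (pos z)" "revealed (pos z')"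
  shows "pos z = pos z'"
proof (rule ccontr)
  assume "pos z \<noteq> pos z'"
  define d where "d = (z' - z) mod int m"
  have "d \<noteq> 0" "0 \<le> d" "d < int m" "pos z' = pos (z + d)"
    using \<open>pos z \<noteq> pos z'\<close> pos_eq_iff[of z' z] pos_offset[of z z'] m_pos
    unfolding d_def by auto
  then have d: "1 \<le> d" "d < int m" "pos z' = pos (z + d)"
    by simp_all
  consider "int s < d" | "d \<le> int s"
    by linarith
  then show False
  proof cases
    case 1
    have "dec (pos (z + 1)) = pos z"
      using assms(1) by (intro revealed_decoded[OF assms(2)]) (subst mod_m_eqI[of _ "int m - 1"], auto)
    moreover have "dec (pos (z + 1)) = pos (z + d)"
      using d 1 by (intro revealed_decoded) (use assms(3) in simp, subst mod_m_eqI[of _ "d - 1"], auto)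
    ultimately show False
      using \<open>pos z \<noteq> pos z'\<close> d(3) by simp
  next
    case 2
    have "dec (pos (z + d + 1)) = pos (z + d)"
      using d assms(1) by (intro revealed_decoded) (use assms(3) in simp, subst mod_m_eqI[of _ "int m - 1"], auto)
    moreover have "dec (pos (z + d + 1)) = pos z"
      using assms(1) 2 d by (intro revealed_decoded[OF assms(2)]) (subst mod_m_eqI[of _ "int m - d - 1"], auto)
    ultimately show False
      using \<open>pos z \<noteq> pos z'\<close> d(3) by simp
  qed
qed

lemma window_by_security:
  assumes "int s \<le> (z - y) mod int m" "pos z \<noteq> dec (pos y)" "E \<in> msgs"
    and "\<And>x. x \<in> W \<Longrightarrow> pos x \<noteq> pos z \<Longrightarrow> E (pos x) = (\<lambda>_. 0) \<and> (x - y) mod int m < int s"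
  shows "\<exists>D\<in>kernel. \<forall>x\<in>W. E (pos x) = D (pos x)"
proof -
  obtain D where D: "D \<in> kernel" "zero_on_window D y" "D (pos z) = E (pos z)"
    using kernel_secure_extension_pos[OF assms(1,2)] msgs_vanish_beyond[OF assms(3)] by blast
  have "E (pos x) = D (pos x)" if "x \<in> W" for x
    using assms(4)[OF that] zero_on_window_mod[OF D(2)] D(3) by (cases "pos x = pos z") auto
  then show ?thesis
    using D(1) by blast
qed

subsection \<open>Boundary decoders\<close>

lemma left_succ_if_decodes_right:
  assumes right: "dec (pos y) = pos (y + int s)"
  shows "dec (pos (y + 1)) = pos y"
proof -
  obtain r where r: "int s \<le> r" "r < int m" "dec (pos (y + 1)) = pos (y + 1 + r)"
    using decoded_offset .
  show ?thesis
  proof (cases "r = int m - 1")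
    case True
    then show ?thesis using r(3) by (simp add: pos_eq_dvd_iff)
  next
    case False
    have "(y + 1 + r - y) mod int m = r + 1"
      using r False by (intro mod_m_eqI) auto
    moreover have "pos (y + 1 + r) \<noteq> pos (y + int s)"
      using r False by (intro pos_neqI) auto
    ultimately obtain X where X: "X \<in> kernel" "zero_on_window X y" "X (pos (y + 1 + r)) \<noteq> (\<lambda>_. 0)"
      using free_outside_decoded[where y = y and z = "y + 1 + r"] r right by auto
    have "X (pos (y + int s)) = (\<lambda>_. 0)"
      using kernel_zero_at_decoded_pos[OF X(1,2)] right by simp
    then have "zero_on_window X (y + 1)"
      using zero_on_window_extend X(2) by blast
    then have "X (dec (pos (y + 1))) = (\<lambda>_. 0)"
      by (rule kernel_zero_at_decoded_pos[OF X(1)])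
    then show ?thesis
      using X(3) r(3) by simp
  qed
qed

lemma decodes_right_if_left_succ:
  assumes left: "dec (pos (y + 1)) = pos y"
  shows "dec (pos y) = pos (y + int s)"
proof -
  obtain r where r: "int s \<le> r" "r < int m" "dec (pos y) = pos (y + r)"
    using decoded_offset .
  show ?thesis
  proof (cases "r = int s")
    case True
    then show ?thesis using r(3) by simp
  next
    case False
    have "(y + r - (y + 1)) mod int m = r - 1"
      using r False by (intro mod_m_eqI) auto
    moreover have "pos (y + r) \<noteq> pos y"
      using r s_pos by (intro pos_neqI) auto
    ultimately obtain X where X: "X \<in> kernel" "zero_on_window X (y + 1)" "X (pos (y + r)) \<noteq> (\<lambda>_. 0)"
      using free_outside_decoded[where y = "y + 1" and z = "y + r"] r False left by auto
    have "X (pos y) = (\<lambda>_. 0)"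
      using kernel_zero_at_decoded_pos[OF X(1,2)] left by simp
    then have "zero_on_window X y"
      using zero_on_window_extend X(2) by blast
    then have "X (dec (pos y)) = (\<lambda>_. 0)"
      by (rule kernel_zero_at_decoded_pos[OF X(1)])
    then show ?thesis
      using X(3) r(3) by simp
  qed
qed

lemma decodes_right_iff_left_succ:
  "dec (pos y) = pos (y + int s) \<longleftrightarrow> dec (pos (y + 1)) = pos y"
  using left_succ_if_decodes_right decodes_right_if_left_succ by blast

lemma right_decoder_exists:
  assumes "dec (pos y) = pos (y + int s) \<or> dec (pos y) = pos (y - 1)"
  obtains y' where "dec (pos y') = pos (y' + int s)"
proof (cases "dec (pos y) = pos (y + int s)")
  case False
  then have "dec (pos (y - 1 + 1)) = pos (y - 1)"
    using assms by simp
  then show thesis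
    using that decodes_right_iff_left_succ[of "y - 1"] by blast
qed

lemma boundary_decoders_even:
  assumes boundary: "\<And>y. dec (pos y) = pos (y + int s) \<or> dec (pos y) = pos (y - 1)"
    and s_le: "s + 2 \<le> m"
  shows "even m"
proof (rule ccontr)
  assume "odd m"
  then obtain k where k: "m = 2 * k + 1" by (metis oddE)
  let ?right = "\<lambda>y. dec (pos y) = pos (y + int s)"
  have not_both: "\<not> (?right y \<and> dec (pos y) = pos (y - 1))" for y
    using pos_neqI[of "y + int s" "y - 1"] s_le by auto
  have right_step: "?right (y + 2)" if "?right y" for y
  proof -
    have "dec (pos (y + 1)) = pos y"
      using that decodes_right_iff_left_succ by blast
    then have "\<not> ?right (y + 1)"
      using not_both[of "y + 1"] by simp
    then have "dec (pos (y + 2)) \<noteq> pos (y + 1)"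
      using decodes_right_iff_left_succ[of "y + 1"] by (simp add: add.assoc)
    then show ?thesis
      using boundary[of "y + 2"] by (simp add: algebra_simps)
  qed
  have right_iter: "?right (y + 2 * int i)" if "?right y" for y i
  proof (induction i)
    case (Suc i)
    then show ?case using right_step[OF Suc] by (simp add: algebra_simps)
  qed (use that in simp)
  obtain y where y: "?right y"
    using right_decoder_exists[OF boundary] .
  have "int m dvd (y + 2 * int k) - (y - 1)" "int m dvd (y + 2 * int k + int s) - (y - 1 + int s)"
    using k by (simp_all add: add.commute)
  then have "pos (y + 2 * int k) = pos (y - 1)" "pos (y + 2 * int k + int s) = pos (y - 1 + int s)"
    unfolding pos_eq_dvd_iff .
  then have "?right (y - 1)"
    using right_iter[OF y, of k] by simp
  then have "dec (pos y) = pos (y - 1)"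
    using decodes_right_iff_left_succ[of "y - 1"] by simp
  then show False
    using not_both y by blast
qed

lemma even_if_s_eq_m_minus_2:
  assumes "s = m - 2"
  shows "even m"
proof (rule boundary_decoders_even)
  fix y
  obtain r where r: "int s \<le> r" "r < int m" "dec (pos y) = pos (y + r)"
    using decoded_offset .
  then consider "r = int s" | "r = int m - 1"
    using assms s_pos by linarith
  then show "dec (pos y) = pos (y + int s) \<or> dec (pos y) = pos (y - 1)"
    by cases (use r(3) in \<open>simp_all add: pos_eq_dvd_iff\<close>)
qed (use assms s_pos in simp)

subsection \<open>Side information of sizes one and two\<close>

definition point_msg :: "int \<Rightarrow> (nat \<Rightarrow> 'f) \<Rightarrow> nat \<Rightarrow> nat \<Rightarrow> 'f" where
  "point_msg z v = (\<lambda>a. if a = pos z then v else (\<lambda>_. 0))"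

lemma point_msg_in_msgs: "X \<in> kernel \<Longrightarrow> point_msg z (X (pos z)) \<in> msgs"
  unfolding point_msg_def
  using point_in_msg_space[OF pos_range] msgs_vanish_beyond[OF kernel_msgs] by blast

lemma point_kernel_not_decoded:
  assumes "point_msg z v \<in> kernel" "v \<noteq> (\<lambda>_. 0)" "int s \<le> (z - y) mod int m"
  shows "dec (pos y) \<noteq> pos z"
proof
  assume decoded: "dec (pos y) = pos z"
  have "pos z \<notin> side_info m s (pos y)"
    using assms(3) by (simp add: pos_in_side_info_iff)
  then have "pos x \<noteq> pos z" if "x \<in> {y..<y + int s}" for x
    using that unfolding side_info_pos by (metis image_eqI)
  then have "zero_on_window (point_msg z v) y"
    unfolding zero_on_window_def point_msg_def by auto
  then have "point_msg z v (dec (pos y)) = (\<lambda>_. 0)"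
    by (rule kernel_zero_at_decoded_pos[OF assms(1)])
  then show False
    using decoded assms(2) by (simp add: point_msg_def)
qed

lemma point_in_kernel_if_s1:
  assumes "s = 1" "X \<in> kernel"
  shows "point_msg z (X (pos z)) \<in> kernel"
proof (rule kernel_by_windows[OF point_msg_in_msgs[OF assms(2)]])
  fix j assume j: "j \<in> {1..m}"
  then have "side_info m s j = {j}"
    using assms(1) by (auto simp: side_info_def)
  then show "\<exists>D\<in>kernel. \<forall>a\<in>side_info m s j. point_msg z (X (pos z)) a = D a"
    using assms(2) zero_in_kernel unfolding point_msg_def
    by (cases "j = pos z") auto
qed

lemma decoded_by_all_if_s1:
  assumes "s = 1" "dec (pos y) = pos z" "pos y' \<noteq> pos z"
  shows "dec (pos y') = pos z"
proof (rule ccontr)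
  assume "dec (pos y') \<noteq> pos z"
  moreover have "int s \<le> (z - y') mod int m"
  proof -
    have "(z - y') mod int m \<noteq> 0" "0 \<le> (z - y') mod int m"
      using assms(3) pos_eq_iff[of z y'] m_pos by auto
    then show ?thesis using assms(1) by linarith
  qed
  ultimately obtain X where "X \<in> kernel" "X (pos z) \<noteq> (\<lambda>_. 0)"
    using free_outside_decoded[where y = y' and z = z] by metis
  then have "dec (pos y) \<noteq> pos z"
    using point_kernel_not_decoded point_in_kernel_if_s1[OF assms(1)] decoded_outside[OF assms(2)]
    by blast
  then show False
    using assms(2) by simp
qed

lemma m_le_2_if_s1:
  assumes "s = 1"
  shows "m \<le> 2"
proof (rule ccontr)
  assume "\<not> m \<le> 2"
  obtain r where "dec (pos 0) = pos (0 + r)"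
    using decoded_offset by metis
  then have dec_0: "dec (pos 0) = pos r" by simp
  obtain r' where dec_r: "dec (pos r) = pos (r + r')" "int s \<le> r'" "r' < int m"
    using decoded_offset by metis
  have "pos (r + r') \<noteq> pos r"
    using dec_r s_pos by (intro pos_neqI) auto
  moreover have "pos (r + 1) \<noteq> pos r" "pos (r + 2) \<noteq> pos r" "pos (r + 2) \<noteq> pos (r + 1)"
    by (rule pos_neqI; use \<open>\<not> m \<le> 2\<close> in simp)+
  ultimately obtain y where y: "pos y \<noteq> pos r" "pos y \<noteq> pos (r + r')"
    by metis
  have "dec (pos y) = pos r" "dec (pos y) = pos (r + r')"
    using decoded_by_all_if_s1[OF assms] dec_0 dec_r(1) y by blast+
  then show False
    using \<open>pos (r + r') \<noteq> pos r\<close> by simp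
qed

lemma point_in_kernel_if_s2:
  assumes s2: "s = 2" and X: "X \<in> kernel"
    and F: "F \<in> kernel" "F (pos z) = (\<lambda>_. 0)" "F (pos (z - 1)) = X (pos (z - 1))"
    and G: "G \<in> kernel" "G (pos z) = (\<lambda>_. 0)" "G (pos (z + 1)) = X (pos (z + 1))"
  shows "point_msg z (X (pos z)) \<in> kernel"
proof (rule kernel_by_windows_pos[OF point_msg_in_msgs[OF X], where j = z])
  fix q assume q: "0 \<le> q" "q < int m"
  have window: "{z + q..<z + q + int s} = {z + q, z + q + 1}"
    using s2 by auto
  have m3: "3 \<le> int m"
    using s2 s_less_m by simp
  consider "q = 0" | "q = int m - 1" | "0 < q" "q < int m - 1"
    using q by linarith
  then show "\<exists>D\<in>kernel. \<forall>x\<in>{z + q..<z + q + int s}. point_msg z (X (pos z)) (pos x) = D (pos x)"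
  proof cases
    case 1
    have "pos (z + 1) \<noteq> pos z"
      using m3 by (intro pos_neqI) auto
    then show ?thesis
      using 1 G unfolding window point_msg_def
      by (intro bexI[OF _ kernel_diff[OF X G(1)]]) (auto simp: fun_eq_iff)
  next
    case 2
    have "pos (z + q) = pos (z - 1)" "pos (z + q + 1) = pos z"
      using 2 by (simp_all add: pos_eq_dvd_iff)
    moreover have "pos (z - 1) \<noteq> pos z"
      using m3 by (intro pos_neqI) auto
    ultimately show ?thesis
      using F unfolding window point_msg_def
      by (intro bexI[OF _ kernel_diff[OF X F(1)]]) (auto simp: fun_eq_iff)
  next
    case 3
    have "pos (z + q) \<noteq> pos z"
      using 3 by (intro pos_neqI) auto
    moreover have "pos (z + q + 1) \<noteq> pos z"
      using 3 by (intro pos_neqI) auto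
    ultimately show ?thesis
      unfolding window point_msg_def by (intro bexI[OF _ zero_in_kernel]) auto
  qed
qed

lemma interior_decoded_revealed_if_s2:
  assumes s2: "s = 2" and decoded: "dec (pos y) = pos (y + r)" and r: "3 \<le> r" "r \<le> int m - 2"
  shows "revealed (pos (y + r))"
  unfolding revealed_def
proof (rule ccontr)
  assume "\<not> (\<forall>X\<in>kernel. X (pos (y + r)) = (\<lambda>_. 0))"
  then obtain X where X: "X \<in> kernel" "X (pos (y + r)) \<noteq> (\<lambda>_. 0)"
    by blast
  have "int s \<le> (y + r - 1 - y) mod int m"
    using s2 r by (subst mod_m_eqI[of _ "r - 1"]) auto
  moreover have "pos (y + r - 1) \<noteq> dec (pos y)"
    unfolding decoded using r by (intro pos_neqI) auto
  ultimately obtain F where F: "F \<in> kernel" "zero_on_window F y" "F (pos (y + r - 1)) = X (pos (y + r - 1))"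
    using kernel_secure_extension_pos kernel_vanish_beyond[OF X(1)] by blast
  have "int s \<le> (y + r + 1 - y) mod int m"
    using s2 r by (subst mod_m_eqI[of _ "r + 1"]) auto
  moreover have "pos (y + r + 1) \<noteq> dec (pos y)"
    unfolding decoded using r by (intro pos_neqI) auto
  ultimately obtain G where G: "G \<in> kernel" "zero_on_window G y" "G (pos (y + r + 1)) = X (pos (y + r + 1))"
    using kernel_secure_extension_pos kernel_vanish_beyond[OF X(1)] by blast
  have "F (pos (y + r)) = (\<lambda>_. 0)" "G (pos (y + r)) = (\<lambda>_. 0)"
    using kernel_zero_at_decoded_pos[OF F(1,2)] kernel_zero_at_decoded_pos[OF G(1,2)] decoded by simp_all
  then have "point_msg (y + r) (X (pos (y + r))) \<in> kernel"
    using point_in_kernel_if_s2[OF s2 X(1) F(1) _ _ G(1)] F(3) G(3) by simp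
  then have "dec (pos y) \<noteq> pos (y + r)"
    using point_kernel_not_decoded X(2) decoded_outside[OF decoded] by blast
  then show False
    using decoded by simp
qed

lemma right_decoder_next_if_s2:
  assumes s2: "s = 2" and m4: "4 \<le> m" and right: "dec (pos y) = pos (y + 2)"
    and free: "\<not> revealed (pos (y + 2))"
  shows "dec (pos (y + 2)) = pos (y + 1)"
proof (rule ccontr)
  assume not_left: "dec (pos (y + 2)) \<noteq> pos (y + 1)"
  obtain X where X: "X \<in> kernel" "X (pos (y + 2)) \<noteq> (\<lambda>_. 0)"
    using free unfolding revealed_def by blast
  have "int s \<le> (y + 1 - (y + 2)) mod int m"
    using s2 m4 by (subst mod_m_eqI[of _ "int m - 1"]) auto
  then obtain F where F: "F \<in> kernel" "zero_on_window F (y + 2)" "F (pos (y + 1)) = X (pos (y + 1))"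
    using kernel_secure_extension_pos not_sym[OF not_left] kernel_vanish_beyond[OF X(1)] by blast
  have "int s \<le> (y + 3 - y) mod int m"
    using s2 m4 by (subst mod_m_eqI[of _ 3]) auto
  moreover have "pos (y + 3) \<noteq> dec (pos y)"
    unfolding right using m4 by (intro pos_neqI) auto
  ultimately obtain G where G: "G \<in> kernel" "zero_on_window G y" "G (pos (y + 3)) = X (pos (y + 3))"
    using kernel_secure_extension_pos kernel_vanish_beyond[OF X(1)] by blast
  have "F (pos (y + 2)) = (\<lambda>_. 0)"
    using F(2) s2 unfolding zero_on_window_def by simp
  moreover have "G (pos (y + 2)) = (\<lambda>_. 0)"
    using kernel_zero_at_decoded_pos[OF G(1,2)] right by simp
  ultimately have "point_msg (y + 2) (X (pos (y + 2))) \<in> kernel"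
    using point_in_kernel_if_s2[OF s2 X(1) F(1) _ _ G(1), where z = "y + 2"] F(3) G(3)
    by (simp add: algebra_simps)
  moreover have "int s \<le> (y + 2 - y) mod int m"
    using s2 m4 by simp
  ultimately have "dec (pos y) \<noteq> pos (y + 2)"
    using point_kernel_not_decoded X(2) by blast
  then show False
    using right by simp
qed

lemma not_revealed_if_s2:
  assumes s2: "s = 2" and m5: "5 \<le> m"
  shows "\<not> revealed (pos z)"
proof
  assume z: "revealed (pos z)"
  have dec_z: "dec (pos (z + i)) = pos z" if "1 \<le> i" "i \<le> 3" for i
    by (rule revealed_decoded[OF z]) (subst mod_m_eqI[of _ "int m - i"], use that m5 s2 in auto)
  have right: "dec (pos z) = pos (z + 2)"
    using decodes_right_iff_left_succ[of z] dec_z[of 1] s2 by simp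
  have "int s \<le> (z + 2 - (z + 3)) mod int m"
    using s2 m5 by (subst mod_m_eqI[of _ "int m - 1"]) auto
  moreover have "pos (z + 2) \<noteq> dec (pos (z + 3))"
    unfolding dec_z[of 3, simplified] using m5 by (intro pos_neqI) auto
  ultimately have "\<not> revealed (pos (z + 2))"
    using free_outside_decoded unfolding revealed_def by metis
  then have "dec (pos (z + 2)) = pos (z + 1)"
    using right_decoder_next_if_s2[OF s2 _ right] m5 by simp
  moreover have "pos (z + 1) \<noteq> pos z"
    using m5 by (intro pos_neqI) auto
  ultimately show False
    using dec_z[of 2] by simp
qed

lemma boundary_decoder_if_s2:
  assumes s2: "s = 2" and m5: "5 \<le> m"
  shows "dec (pos y) = pos (y + int s) \<or> dec (pos y) = pos (y - 1)"
proof -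
  obtain r where r: "int s \<le> r" "r < int m" "dec (pos y) = pos (y + r)"
    using decoded_offset .
  consider "r = int s" | "r = int m - 1" | "3 \<le> r" "r \<le> int m - 2"
    using r(1,2) s2 by linarith
  then show ?thesis
  proof cases
    case 3
    then show ?thesis
      using interior_decoded_revealed_if_s2[OF s2 r(3)] not_revealed_if_s2[OF s2 m5] by blast
  qed (use r(3) in \<open>simp_all add: pos_eq_dvd_iff\<close>)
qed

lemma m_le_4_if_s2:
  assumes s2: "s = 2"
  shows "m \<le> 4"
proof (rule ccontr)
  assume "\<not> m \<le> 4"
  then have m5: "5 \<le> m" by simp
  obtain y where right: "dec (pos y) = pos (y + 2)"
    using right_decoder_exists[OF boundary_decoder_if_s2[OF s2 m5]] s2 by (metis of_nat_numeral)
  have "dec (pos (y + 2)) = pos (y + 1)"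
    using right_decoder_next_if_s2[OF s2 _ right] not_revealed_if_s2[OF s2 m5] m5 by simp
  then have "dec (pos (y + 1)) = pos (y + 3)"
    using decodes_right_iff_left_succ[of "y + 1"] s2 by (simp add: algebra_simps)
  moreover have "dec (pos (y + 1)) = pos y"
    using decodes_right_iff_left_succ[of y] right s2 by simp
  moreover have "pos (y + 3) \<noteq> pos y"
    using m5 by (intro pos_neqI) auto
  ultimately show False
    by simp
qed

subsection \<open>Side information of size three\<close>

definition by_offset :: "int \<Rightarrow> (int \<Rightarrow> nat \<Rightarrow> nat \<Rightarrow> 'f) \<Rightarrow> nat \<Rightarrow> nat \<Rightarrow> 'f" where
  "by_offset j \<Phi> a = \<Phi> ((int a - 1 - j) mod int m) a"

lemma by_offset_pos: "by_offset j \<Phi> (pos x) = \<Phi> ((x - j) mod int m) (pos x)"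
proof -
  have "int (pos x) - 1 = x mod int m"
    unfolding pos_def using m_pos by simp
  then show ?thesis
    unfolding by_offset_def by (simp add: mod_diff_left_eq)
qed

lemma by_offset_in_msgs: "(\<And>p. \<Phi> p \<in> msgs) \<Longrightarrow> by_offset j \<Phi> \<in> msgs"
  unfolding msg_space_def by_offset_def by auto

text \<open>Since \<open>F\<close> and \<open>G\<close> agree with \<open>X\<close> at the offsets \<open>2\<close> and \<open>0\<close> from \<open>j\<close> and vanish on the
  windows of \<open>j + \<alpha>\<close> and \<open>j + \<beta>\<close>, the cut-offs at \<open>\<alpha>\<close> and \<open>\<beta> + 3\<close> are invisible inside every
  window of three consecutive offsets, which therefore sees a kernel element.\<close>
definition glue_s3 ::
  "int \<Rightarrow> int \<Rightarrow> int \<Rightarrow> (nat \<Rightarrow> nat \<Rightarrow> 'f) \<Rightarrow> (nat \<Rightarrow> nat \<Rightarrow> 'f) \<Rightarrow> (nat \<Rightarrow> nat \<Rightarrow> 'f) \<Rightarrow> nat \<Rightarrow> nat \<Rightarrow> 'f"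
where
  "glue_s3 j \<alpha> \<beta> X F G = by_offset j (\<lambda>p. if p \<le> 2 then (\<lambda>_ _. 0)
     else X - (if p < \<alpha> then F else (\<lambda>_ _. 0)) - (if \<beta> + 3 \<le> p then G else (\<lambda>_ _. 0)))"

lemma glue_s3_low:
  assumes "j \<le> x" "x \<le> j + 2" "3 \<le> m"
  shows "glue_s3 j \<alpha> \<beta> X F G (pos x) = (\<lambda>_. 0)"
  using assms unfolding glue_s3_def by_offset_pos by simp

lemma glue_s3_in_msgs:
  "X \<in> kernel \<Longrightarrow> F \<in> kernel \<Longrightarrow> G \<in> kernel \<Longrightarrow> glue_s3 j \<alpha> \<beta> X F G \<in> msgs"
  unfolding glue_s3_def
  by (rule by_offset_in_msgs, rule kernel_msgs) (use zero_in_kernel in \<open>auto intro!: kernel_diff\<close>)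

lemma glue_s3_middle:
  assumes "3 \<le> \<alpha>" "\<alpha> \<le> p" "p < \<beta> + 3" "p < int m"
  shows "glue_s3 j \<alpha> \<beta> X F G (pos (j + p)) = X (pos (j + p))"
  using assms unfolding glue_s3_def by_offset_pos by (simp add: fun_eq_iff)

lemma glue_s3_interior:
  assumes s3: "s = 3"
    and F: "zero_on_window F (j + \<alpha>)" "F (pos (j + 2)) = X (pos (j + 2))"
    and G: "zero_on_window G (j + \<beta>)" "G (pos j) = X (pos j)"
    and \<alpha>: "3 \<le> \<alpha>" "\<alpha> \<le> int m - 2" and \<beta>: "2 \<le> \<beta>" "\<beta> \<le> int m - 3"
    and q: "2 \<le> q" "q \<le> int m - 2" and p: "q \<le> p" "p \<le> q + 2"
  shows "glue_s3 j \<alpha> \<beta> X F G (pos (j + p)) =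
    (X - (if q \<le> \<alpha> then F else (\<lambda>_ _. 0)) - (if \<beta> \<le> q then G else (\<lambda>_ _. 0))) (pos (j + p))"
proof -
  have F_zero: "F (pos (j + p')) = (\<lambda>_. 0)" if "\<alpha> \<le> p'" "p' \<le> \<alpha> + 2" for p'
    using F(1) that s3 unfolding zero_on_window_def by (auto dest: bspec[of _ _ "j + p'"])
  have G_zero: "G (pos (j + p')) = (\<lambda>_. 0)" if "\<beta> \<le> p'" "p' \<le> \<beta> + 2" for p'
    using G(1) that s3 unfolding zero_on_window_def by (auto dest: bspec[of _ _ "j + p'"])
  consider "p = 2" | "3 \<le> p" "p < int m" | "p = int m"
    using q p by linarith
  then show ?thesis
  proof cases
    case 1
    then show ?thesis
      using glue_s3_low[of j "j + 2"] q p \<alpha> \<beta> F(2) G_zero[of 2] by (auto simp: fun_eq_iff)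
  next
    case 2
    have "(if p < \<alpha> then F else (\<lambda>_ _. 0)) (pos (j + p)) = (if q \<le> \<alpha> then F else (\<lambda>_ _. 0)) (pos (j + p))"
      using F_zero[of p] p by auto
    moreover have "(if \<beta> + 3 \<le> p then G else (\<lambda>_ _. 0)) (pos (j + p)) = (if \<beta> \<le> q then G else (\<lambda>_ _. 0)) (pos (j + p))"
      using G_zero[of p] p by auto
    ultimately show ?thesis
      using 2 unfolding glue_s3_def by_offset_pos by simp
  next
    case 3
    have q_eq: "q = int m - 2"
      using 3 p q by linarith
    have pos_p: "pos (j + p) = pos j"
      using 3 by (simp add: pos_eq_dvd_iff)
    have "F (pos j) = (\<lambda>_. 0)" if "q \<le> \<alpha>"
    proof -
      have "\<alpha> = int m - 2"
        using that q_eq \<alpha> by linarith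
      then have "pos (j + (\<alpha> + 2)) = pos j"
        by (simp add: pos_eq_dvd_iff)
      then show ?thesis
        using F_zero[of "\<alpha> + 2"] by simp
    qed
    moreover have "\<beta> \<le> q"
      using q_eq \<beta> by simp
    ultimately show ?thesis
      using 3 G(2) pos_p unfolding glue_s3_def by_offset_pos by (simp add: fun_eq_iff)
  qed
qed

lemma glue_s3_window_after:
  assumes s3: "s = 3" and m7: "7 \<le> m" and E: "glue_s3 j \<alpha> \<beta> X F G \<in> msgs"
    and free: "pos (j + 3) \<noteq> dec (pos j)"
  shows "\<exists>D\<in>kernel. \<forall>x\<in>{j + 1..<j + 4}. glue_s3 j \<alpha> \<beta> X F G (pos x) = D (pos x)"
proof (rule window_by_security[OF _ free E])
  show "int s \<le> (j + 3 - j) mod int m"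
    using s3 m7 by simp
  fix x assume x: "x \<in> {j + 1..<j + 4}" "pos x \<noteq> pos (j + 3)"
  then have "x \<noteq> j + 3" by auto
  then have "j + 1 \<le> x" "x \<le> j + 2"
    using x(1) by auto
  then show "glue_s3 j \<alpha> \<beta> X F G (pos x) = (\<lambda>_. 0) \<and> (x - j) mod int m < int s"
    using glue_s3_low s3 m7 by simp
qed

lemma glue_s3_window_before:
  assumes s3: "s = 3" and m7: "7 \<le> m" and E: "glue_s3 j \<alpha> \<beta> X F G \<in> msgs"
    and free: "pos (j - 1) \<noteq> dec (pos j)"
  shows "\<exists>D\<in>kernel. \<forall>x\<in>{j - 1..<j + 2}. glue_s3 j \<alpha> \<beta> X F G (pos x) = D (pos x)"
proof (rule window_by_security[OF _ free E])
  show "int s \<le> (j - 1 - j) mod int m"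
    using s3 m7 by (subst mod_m_eqI[of _ "int m - 1"]) auto
  fix x assume x: "x \<in> {j - 1..<j + 2}" "pos x \<noteq> pos (j - 1)"
  then have "x \<noteq> j - 1" by auto
  then have "j \<le> x" "x \<le> j + 1"
    using x(1) by auto
  then show "glue_s3 j \<alpha> \<beta> X F G (pos x) = (\<lambda>_. 0) \<and> (x - j) mod int m < int s"
    using glue_s3_low s3 m7 by simp
qed

lemma glue_s3_in_kernel:
  assumes s3: "s = 3" and m7: "7 \<le> m" and X: "X \<in> kernel"
    and F: "F \<in> kernel" "zero_on_window F (j + \<alpha>)" "F (pos (j + 2)) = X (pos (j + 2))"
    and G: "G \<in> kernel" "zero_on_window G (j + \<beta>)" "G (pos j) = X (pos j)"
    and \<alpha>: "3 \<le> \<alpha>" "\<alpha> \<le> int m - 2" and \<beta>: "2 \<le> \<beta>" "\<beta> \<le> int m - 3"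
    and free: "pos (j + 3) \<noteq> dec (pos j)" "pos (j - 1) \<noteq> dec (pos j)"
  shows "glue_s3 j \<alpha> \<beta> X F G \<in> kernel"
proof (rule kernel_by_windows_pos[where j = j])
  let ?E = "glue_s3 j \<alpha> \<beta> X F G"
  show E: "?E \<in> msgs"
    using glue_s3_in_msgs[OF X F(1) G(1)] .
  fix q assume q: "0 \<le> q" "q < int m"
  consider "q = 0" | "q = 1" | "q = int m - 1" | "2 \<le> q" "q \<le> int m - 2"
    using q by linarith
  then show "\<exists>D\<in>kernel. \<forall>x\<in>{j + q..<j + q + int s}. ?E (pos x) = D (pos x)"
  proof cases
    case 1
    then show ?thesis
      using glue_s3_low[of j] s3 m7 by (intro bexI[OF _ zero_in_kernel]) auto
  next
    case 2
    then show ?thesis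
      using glue_s3_window_after[OF s3 m7 E free(1)] s3 by (simp add: add.assoc)
  next
    case 3
    obtain D where D: "D \<in> kernel" "\<forall>x\<in>{j - 1..<j + 2}. ?E (pos x) = D (pos x)"
      using glue_s3_window_before[OF s3 m7 E free(2)] by blast
    have "{j + q..<j + q + int s} = {j - 1 + int m..<j + 2 + int m}"
      using 3 s3 by auto
    then show ?thesis
      using D(1) ball_pos_add_period[OF D(2)] by auto
  next
    case 4
    let ?D = "X - (if q \<le> \<alpha> then F else (\<lambda>_ _. 0)) - (if \<beta> \<le> q then G else (\<lambda>_ _. 0))"
    have "?D \<in> kernel"
      using X F(1) G(1) zero_in_kernel by (intro kernel_diff) auto
    moreover have "?E (pos x) = ?D (pos x)" if "x \<in> {j + q..<j + q + int s}" for x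
      using glue_s3_interior[OF s3 F(2,3) G(2,3) \<alpha> \<beta> 4, of "x - j"] that s3 by simp
    ultimately show ?thesis
      by blast
  qed
qed

lemma interior_decoder_dichotomy_if_s3:
  assumes s3: "s = 3" and m7: "7 \<le> m" and decoded: "dec (pos j) = pos (j + \<delta>)"
    and \<delta>: "4 \<le> \<delta>" "\<delta> \<le> int m - 2" and free: "\<not> revealed (pos (j + \<delta>))"
  obtains (left) "\<And>\<alpha>. 3 \<le> \<alpha> \<Longrightarrow> \<alpha> \<le> \<delta> \<Longrightarrow> dec (pos (j + \<alpha>)) = pos (j + 2)"
    | (right) "\<And>\<beta>. 2 \<le> \<beta> \<Longrightarrow> \<delta> - 2 \<le> \<beta> \<Longrightarrow> \<beta> \<le> int m - 3 \<Longrightarrow> dec (pos (j + \<beta>)) = pos j"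
proof (rule ccontr)
  assume "\<not> thesis"
  then obtain \<alpha> \<beta> where \<alpha>: "3 \<le> \<alpha>" "\<alpha> \<le> \<delta>" "dec (pos (j + \<alpha>)) \<noteq> pos (j + 2)"
    and \<beta>: "2 \<le> \<beta>" "\<delta> - 2 \<le> \<beta>" "\<beta> \<le> int m - 3" "dec (pos (j + \<beta>)) \<noteq> pos j"
    using left right by blast
  obtain X where X: "X \<in> kernel" "X (pos (j + \<delta>)) \<noteq> (\<lambda>_. 0)"
    using free unfolding revealed_def by blast
  have "int s \<le> (j + 2 - (j + \<alpha>)) mod int m"
    using s3 \<alpha> \<delta> by (subst mod_m_eqI[of _ "int m + 2 - \<alpha>"]) auto
  then obtain F where F: "F \<in> kernel" "zero_on_window F (j + \<alpha>)" "F (pos (j + 2)) = X (pos (j + 2))"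
    using kernel_secure_extension_pos not_sym[OF \<alpha>(3)] kernel_vanish_beyond[OF X(1)] by blast
  have "int s \<le> (j - (j + \<beta>)) mod int m"
    using s3 \<beta> by (subst mod_m_eqI[of _ "int m - \<beta>"]) auto
  then obtain G where G: "G \<in> kernel" "zero_on_window G (j + \<beta>)" "G (pos j) = X (pos j)"
    using kernel_secure_extension_pos not_sym[OF \<beta>(4)] kernel_vanish_beyond[OF X(1)] by blast
  have "pos (j + 3) \<noteq> dec (pos j)" "pos (j - 1) \<noteq> dec (pos j)"
    unfolding decoded using \<delta> by (auto simp: pos_neqI)
  then have "glue_s3 j \<alpha> \<beta> X F G \<in> kernel"
    using glue_s3_in_kernel[OF s3 m7 X(1) F G] \<alpha> \<beta> \<delta> by simp
  moreover have "glue_s3 j \<alpha> \<beta> X F G (pos x) = (\<lambda>_. 0)" if "x \<in> {j..<j + int s}" for x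
    using glue_s3_low[of j x] that s3 m7 by simp
  then have "zero_on_window (glue_s3 j \<alpha> \<beta> X F G) j"
    unfolding zero_on_window_def by blast
  ultimately have "glue_s3 j \<alpha> \<beta> X F G (pos (j + \<delta>)) = (\<lambda>_. 0)"
    using kernel_zero_at_decoded_pos decoded by metis
  then show False
    using glue_s3_middle[of \<alpha> \<delta> \<beta> j X F G] \<alpha> \<beta> \<delta> X(2) by simp
qed

lemma no_common_left_target_if_s3:
  assumes s3: "s = 3" and m7: "7 \<le> m"
    and d3: "dec (pos (j + 3)) = pos (j + 2)" and d4: "dec (pos (j + 4)) = pos (j + 2)"
    and not_left: "dec (pos j) \<noteq> pos (j - 1)"
  shows False
proof -
  have d2: "dec (pos (j + 2)) = pos (j + 5)"
    using decodes_right_iff_left_succ[of "j + 2"] d3 s3 by (simp add: algebra_simps)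
  have wrap: "pos (j + 4 + (int m - 2)) = pos (j + 2)" "pos (j + 4 + (int m - 3)) = pos (j + 1)"
    by (simp_all add: pos_eq_dvd_iff)
  have free: "\<not> revealed (pos (j + 4 + (int m - 2)))"
  proof
    assume "revealed (pos (j + 4 + (int m - 2)))"
    then have "dec (pos (j - 1)) = pos (j + 2)"
      using s3 m7 wrap(1) by (intro revealed_decoded) auto
    then have "dec (pos j) = pos (j - 1)"
      using decodes_right_iff_left_succ[of "j - 1"] s3 by (simp add: algebra_simps)
    then show False
      using not_left by simp
  qed
  have decoded: "dec (pos (j + 4)) = pos (j + 4 + (int m - 2))"
    using d4 wrap(1) by simp
  have \<delta>: "4 \<le> int m - 2" "int m - 2 \<le> int m - 2"
    using m7 by simp_all
  show False
  proof (cases rule: interior_decoder_dichotomy_if_s3[OF s3 m7 decoded \<delta> free, case_names left right])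
    case left
    have "dec (pos (j + 4 + (int m - 2))) = pos (j + 4 + 2)"
      using left[of "int m - 2"] m7 by simp
    then have "dec (pos (j + 2)) = pos (j + 6)"
      using wrap(1) by (simp add: add.assoc)
    moreover have "pos (j + 6) \<noteq> pos (j + 5)"
      using m7 by (intro pos_neqI) auto
    ultimately show False
      using d2 by simp
  next
    case right
    have "dec (pos (j + 4 + (int m - 3))) = pos (j + 4)"
      using right[of "int m - 3"] m7 by simp
    then have "dec (pos (j + 1)) = pos (j + 1 + int s)"
      using wrap(2) s3 by (simp add: algebra_simps)
    then have "dec (pos (j + 2)) = pos (j + 1)"
      using decodes_right_iff_left_succ[of "j + 1"] by (simp add: algebra_simps)
    moreover have "pos (j + 5) \<noteq> pos (j + 1)"
      using m7 by (intro pos_neqI) auto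
    ultimately show False
      using d2 by simp
  qed
qed

lemma no_common_right_target_if_s3:
  assumes s3: "s = 3" and m7: "7 \<le> m"
    and d3: "dec (pos (j - 3)) = pos j" and d4: "dec (pos (j - 4)) = pos j"
    and not_right: "dec (pos j) \<noteq> pos (j + 3)"
  shows False
proof -
  have d2: "dec (pos (j - 2)) = pos (j - 3)"
    using decodes_right_iff_left_succ[of "j - 3"] d3 s3 by (simp add: algebra_simps)
  have free: "\<not> revealed (pos (j - 4 + 4))"
  proof
    assume "revealed (pos (j - 4 + 4))"
    then have "dec (pos (j + 1)) = pos j"
      using s3 m7 by (intro revealed_decoded) (simp, subst mod_m_eqI[of _ "int m - 1"], auto)
    then have "dec (pos j) = pos (j + 3)"
      using decodes_right_iff_left_succ[of j] s3 by simp
    then show False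
      using not_right by simp
  qed
  have decoded: "dec (pos (j - 4)) = pos (j - 4 + 4)"
    using d4 by simp
  have \<delta>: "4 \<le> (4::int)" "4 \<le> int m - 2"
    using m7 by simp_all
  show False
  proof (cases rule: interior_decoder_dichotomy_if_s3[OF s3 m7 decoded \<delta> free, case_names left right])
    case left
    have "dec (pos (j - 4 + 3)) = pos (j - 4 + 2)"
      using left[of 3] by simp
    then have "dec (pos (j - 2 + 1)) = pos (j - 2)"
      by (simp add: algebra_simps)
    then have "dec (pos (j - 2)) = pos (j + 1)"
      using decodes_right_iff_left_succ[of "j - 2"] s3 by (simp add: algebra_simps)
    moreover have "pos (j + 1) \<noteq> pos (j - 3)"
      using m7 by (intro pos_neqI) auto
    ultimately show False
      using d2 by simp
  next
    case right
    have "dec (pos (j - 4 + 2)) = pos (j - 4)"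
      using right[of 2] m7 by simp
    then have "dec (pos (j - 2)) = pos (j - 4)"
      by (simp add: algebra_simps)
    moreover have "pos (j - 4) \<noteq> pos (j - 3)"
      using m7 by (intro pos_neqI) auto
    ultimately show False
      using d2 by simp
  qed
qed

lemma interior_decoded_revealed_if_s3:
  assumes s3: "s = 3" and m7: "7 \<le> m" and decoded: "dec (pos j) = pos (j + \<delta>)"
    and \<delta>: "4 \<le> \<delta>" "\<delta> \<le> int m - 2"
  shows "revealed (pos (j + \<delta>))"
proof (rule ccontr)
  assume free: "\<not> revealed (pos (j + \<delta>))"
  show False
  proof (cases rule: interior_decoder_dichotomy_if_s3[OF s3 m7 decoded \<delta> free, case_names left right])
    case left
    have "dec (pos (j + 3)) = pos (j + 2)" "dec (pos (j + 4)) = pos (j + 2)"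
      using left \<delta> by simp_all
    moreover have "dec (pos j) \<noteq> pos (j - 1)"
      unfolding decoded using \<delta> by (intro pos_neqI) auto
    ultimately show False
      by (rule no_common_left_target_if_s3[OF s3 m7])
  next
    case right
    have "dec (pos (j + (int m - 3))) = pos j" "dec (pos (j + (int m - 4))) = pos j"
      using right \<delta> m7 by simp_all
    moreover have "pos (j + (int m - 3)) = pos (j - 3)" "pos (j + (int m - 4)) = pos (j - 4)"
      by (simp_all add: pos_eq_dvd_iff)
    moreover have "dec (pos j) \<noteq> pos (j + 3)"
      unfolding decoded using \<delta> by (intro pos_neqI) auto
    ultimately show False
      using no_common_right_target_if_s3[OF s3 m7, of j] by simp
  qed
qed

lemma not_revealed_if_s3:
  assumes s3: "s = 3" and m7: "7 \<le> m"
  shows "\<not> revealed (pos z)"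
proof
  assume revealed_z: "revealed (pos z)"
  have "dec (pos (z + 1)) = pos z"
    using s3 m7 by (intro revealed_decoded[OF revealed_z]) (subst mod_m_eqI[of _ "int m - 1"], auto)
  then have right_z: "dec (pos z) = pos (z + 3)"
    using decodes_right_iff_left_succ[of z] s3 by simp
  have "dec (pos (z - 3)) = pos z"
    using s3 m7 by (intro revealed_decoded[OF revealed_z]) auto
  then have left_z2: "dec (pos (z - 2)) = pos (z - 3)"
    using decodes_right_iff_left_succ[of "z - 3"] s3 by (simp add: algebra_simps)
  obtain r where r: "3 \<le> r" "r < int m" "dec (pos (z - 1)) = pos (z - 1 + r)"
    using decoded_offset s3 by (metis of_nat_numeral)
  consider "r = 3" | "r = int m - 1" | "4 \<le> r" "r \<le> int m - 2"
    using r by linarith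
  then show False
  proof cases
    case 1
    then have "dec (pos z) = pos (z - 1)"
      using decodes_right_iff_left_succ[of "z - 1"] r(3) s3 by simp
    moreover have "pos (z + 3) \<noteq> pos (z - 1)"
      using m7 by (intro pos_neqI) auto
    ultimately show False
      using right_z by simp
  next
    case 2
    then have "dec (pos (z - 1)) = pos (z - 2)"
      using r(3) by (simp add: pos_eq_dvd_iff)
    then have "dec (pos (z - 2)) = pos (z + 1)"
      using decodes_right_iff_left_succ[of "z - 2"] s3 by (simp add: algebra_simps)
    moreover have "pos (z + 1) \<noteq> pos (z - 3)"
      using m7 by (intro pos_neqI) auto
    ultimately show False
      using left_z2 by simp
  next
    case 3
    then have "revealed (pos (z - 1 + r))"
      using interior_decoded_revealed_if_s3[OF s3 m7 r(3)] by simp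
    then have "pos z = pos (z - 1 + r)"
      using revealed_unique revealed_z s3 m7 by simp
    moreover have "pos z \<noteq> pos (z - 1 + r)"
      using 3 by (intro pos_neqI) auto
    ultimately show False
      by simp
  qed
qed

lemma boundary_decoder_if_s3:
  assumes s3: "s = 3" and m7: "7 \<le> m"
  shows "dec (pos y) = pos (y + int s) \<or> dec (pos y) = pos (y - 1)"
proof (rule ccontr)
  assume not_boundary: "\<not> ?thesis"
  obtain r where "int s \<le> r" "r < int m" and r_dec: "dec (pos y) = pos (y + r)"
    using decoded_offset .
  moreover have "r \<noteq> int m - 1"
    using not_boundary r_dec by (auto simp: pos_eq_dvd_iff)
  moreover have "r \<noteq> int s"
    using not_boundary r_dec by auto
  ultimately have "4 \<le> r" "r \<le> int m - 2"
    using s3 by simp_all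
  then show False
    using interior_decoded_revealed_if_s3[OF s3 m7 r_dec] not_revealed_if_s3[OF s3 m7] by blast
qed

lemma even_if_s3:
  assumes s3: "s = 3"
  shows "even m"
proof (cases "7 \<le> m")
  case True
  then show ?thesis
    using boundary_decoders_even boundary_decoder_if_s3[OF s3] s3 by simp
next
  case False
  then consider "m = 4" | "m = 5" | "m = 6"
    using s3 s_less_m by linarith
  then show ?thesis
    by cases (use even_if_s_eq_m_minus_2 s3 in auto)
qed

end

lemma secure_linear_scheme_of_feasible:
  fixes c :: "nat \<Rightarrow> nat \<Rightarrow> nat \<Rightarrow> nat \<Rightarrow> 'f::{field,finite}"
  assumes "feasible_linear m s \<kappa> L c" "1 \<le> s" "s < m" "1 \<le> \<kappa>"
  obtains dec where "secure_linear_scheme m s \<kappa> L c dec"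
proof -
  let ?P = "\<lambda>j d. d \<in> {1..m} - side_info m s j \<and>
      (\<exists>DEC :: (nat \<Rightarrow> nat \<Rightarrow> 'f) \<Rightarrow> (nat \<Rightarrow> nat \<Rightarrow> 'f) \<Rightarrow> (nat \<Rightarrow> 'f).
         \<forall>W\<in>msg_space m \<kappa>. DEC (restr (side_info m s j) W) (lin_transmit m s \<kappa> L c W) = W d) \<and>
      (\<forall>i\<in>{1..m} - ({d} \<union> side_info m s j).
         cond_indep_unif (msg_space m \<kappa> :: (nat \<Rightarrow> nat \<Rightarrow> 'f) set)
           (\<lambda>W. W i) (lin_transmit m s \<kappa> L c) (\<lambda>W. restr (side_info m s j) W))"
  have "\<forall>j\<in>{1..m}. \<exists>d. ?P j d"
    using assms(1) unfolding feasible_linear_def Bex_def .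
  then have "\<exists>dec. \<forall>j\<in>{1..m}. ?P j (dec j)"
    by (rule bchoice)
  then obtain dec where dec: "\<forall>j\<in>{1..m}. ?P j (dec j)" ..
  show thesis
    by (rule that, unfold_locales) (use assms(2-4) dec in blast)+
qed

theorem theorem1:
  fixes m s \<kappa> :: nat and L :: "nat \<Rightarrow> nat"
    and c :: "nat \<Rightarrow> nat \<Rightarrow> nat \<Rightarrow> nat \<Rightarrow> 'f::{field,finite}"
  assumes "m \<ge> 2" and "1 \<le> s" and "s \<le> m - 1" and "\<kappa> \<ge> 1"
    and "(s = 1 \<and> m \<ge> 3) \<or> (s = 2 \<and> m \<ge> 5) \<or> (s = 3 \<and> odd m) \<or> (s = m - 2 \<and> odd m)"
  shows "\<not> feasible_linear m s \<kappa> L c"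
proof
  assume "feasible_linear m s \<kappa> L c"
  then obtain dec where "secure_linear_scheme m s \<kappa> L c dec"
    using assms(1-4) by (elim secure_linear_scheme_of_feasible) auto
  then interpret secure_linear_scheme m s \<kappa> L c dec .
  show False
    using assms(5) m_le_2_if_s1 m_le_4_if_s2 even_if_s3 even_if_s_eq_m_minus_2 by auto
qed

end
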